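(* Suppose that for the given $n$, $\theta_{n,1}\ge\theta_{n,2}\ge\cdots\ge\theta_{n,M_n}$. Then $$\min_{\mathbf w\in\mathcal W_n}R_n(\mathbf w)=\mathrm{tr}(\mathbf P_1\boldsymbol\Omega)+\sum_{m=2}^{M_n}\frac{a_m b_m}{a_m+b_m}+\boldsymbol\mu^\top(\mathbf I_n-\mathbf P_{M_n})\boldsymbol\mu,$$ attained at $w_m=\gamma_m-\gamma_{m+1}$ ($m<M_n$), $w_{M_n}=\gamma_{M_n}$, with $\gamma_1=1$ and $\gamma_m=a_m/(a_m+b_m)$ for $m\ge2$; $$\min_{\mathbf w\in\mathcal Q_n}R_n(\mathbf w)=\sum_{m=1}^{M_n}\frac{a_m b_m}{a_m+b_m}+\boldsymbol\mu^\top(\mathbf I_n-\mathbf P_{M_n})\boldsymbol\mu;$$ and consequently $$\min_{\mathcal W_n}R_n-\min_{\mathcal Q_n}R_n=\frac{\{\mathrm{tr}(\mathbf P_1\boldsymbol\Omega)\}^2}{\boldsymbol\mu^\top\mathbf P_1\boldsymbol\mu+\mathrm{tr}(\mathbf P_1\boldsymbol\Omega)}\le\mathrm{tr}(\mathbf P_1\boldsymbol\Omega).$$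
   Context: Fix $n$. Let $\mathbf y=\boldsymbol\mu+\boldsymbol\varepsilon\in\mathbb R^n$ with $\boldsymbol\mu$ deterministic, $E\boldsymbol\varepsilon=\mathbf 0$, $\mathrm{Cov}(\boldsymbol\varepsilon)=\boldsymbol\Omega$ positive definite. Let $\mathbf X$ be a nonstochastic $n\times p$ matrix, integers $0=\nu_0<\nu_1<\cdots<\nu_{M_n}\le p$ with $M_n\ge2$, $\mathbf X_m$ the first $\nu_m$ columns of $\mathbf X$ (full column rank), $\mathbf P_m=\mathbf X_m(\mathbf X_m^\top\mathbf X_m)^{-1}\mathbf X_m^\top$, $\mathbf P_0=\mathbf 0$. For $\mathbf w\in\mathbb R^{M_n}$, $R_n(\mathbf w)=E\|\sum_{m=1}^{M_n}w_m\mathbf P_m\mathbf y-\boldsymbol\mu\|^2$. $\mathcal W_n=\{\mathbf w\in[0,1]^{M_n}:\sum_m w_m=1\}$, $\mathcal Q_n=[0,1]^{M_n}$. Write $a_m=\boldsymbol\mu^\top(\mathbf P_m-\mathbf P_{m-1})\boldsymbol\mu$, $b_m=\mathrm{tr}\{(\mathbf P_m-\mathbf P_{m-1})\boldsymbol\Omega\}$ and $\theta_{n,m}=a_m/(n b_m)$. *)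

theory Defs
  imports "HOL-Probability.Probability" "Jordan_Normal_Form.Gauss_Jordan_Elimination"
begin

definition mtrace :: "real mat \<Rightarrow> real" where
  "mtrace A = (\<Sum>i<dim_row A. A $$ (i,i))"

definition Xsub :: "real mat \<Rightarrow> nat \<Rightarrow> real mat" where
  "Xsub X k = mat (dim_row X) k (\<lambda>(i,j). X $$ (i,j))"

definition hatm :: "real mat \<Rightarrow> nat \<Rightarrow> real mat" where
  "hatm X k = (if k = 0 then 0\<^sub>m (dim_row X) (dim_row X)
     else Xsub X k * the (mat_inverse (transpose_mat (Xsub X k) * Xsub X k)) * transpose_mat (Xsub X k))"

definition Pm :: "real mat \<Rightarrow> (nat \<Rightarrow> nat) \<Rightarrow> nat \<Rightarrow> real mat" where
  "Pm X \<nu> m = hatm X (\<nu> m)"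

definition acoef :: "real mat \<Rightarrow> (nat \<Rightarrow> nat) \<Rightarrow> real vec \<Rightarrow> nat \<Rightarrow> real" where
  "acoef X \<nu> \<mu> m = \<mu> \<bullet> ((Pm X \<nu> m - Pm X \<nu> (m - 1)) *\<^sub>v \<mu>)"

definition bcoef :: "real mat \<Rightarrow> (nat \<Rightarrow> nat) \<Rightarrow> real mat \<Rightarrow> nat \<Rightarrow> real" where
  "bcoef X \<nu> \<Omega> m = mtrace ((Pm X \<nu> m - Pm X \<nu> (m - 1)) * \<Omega>)"

definition Pw :: "real mat \<Rightarrow> (nat \<Rightarrow> nat) \<Rightarrow> nat \<Rightarrow> (nat \<Rightarrow> real) \<Rightarrow> real mat" where
  "Pw X \<nu> M w = mat (dim_row X) (dim_row X) (\<lambda>(i,j). \<Sum>m=1..M. w m * Pm X \<nu> m $$ (i,j))"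

definition risk :: "'a measure \<Rightarrow> ('a \<Rightarrow> real vec) \<Rightarrow> real mat \<Rightarrow> (nat \<Rightarrow> nat) \<Rightarrow> nat
    \<Rightarrow> real vec \<Rightarrow> (nat \<Rightarrow> real) \<Rightarrow> real" where
  "risk Pr \<epsilon> X \<nu> M \<mu> w =
     (\<integral>\<omega>. (let d = Pw X \<nu> M w *\<^sub>v (\<mu> + \<epsilon> \<omega>) - \<mu> in d \<bullet> d) \<partial>Pr)"

definition Wset :: "nat \<Rightarrow> (nat \<Rightarrow> real) set" where
  "Wset M = {w. (\<forall>m\<in>{1..M}. 0 \<le> w m \<and> w m \<le> 1) \<and> (\<Sum>m=1..M. w m) = 1}"

definition Qset :: "nat \<Rightarrow> (nat \<Rightarrow> real) set" where
  "Qset M = {w. \<forall>m\<in>{1..M}. 0 \<le> w m \<and> w m \<le> 1}"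

end

(*
  Write gamma_j = w_j + ... + w_M for the tail sums of the weights.  The hat matrices are
  nested, P_i P_j = P_(min i j), so for A = sum_m w_m P_m the risk
  |(A - I) mu|^2 + tr (A' A Omega) is a quadratic form in w whose coefficients depend on
  (m, m') only through min m m'.  Summation by parts in the tail sums turns it into
  sum_j [a_j (1 - gamma_j)^2 + b_j gamma_j^2] + mu' (I - P_M) mu, where a_j >= 0 and b_j > 0
  because P_j - P_(j-1) is a nonzero orthogonal projection and Omega is positive definite.
  Each summand is minimised at gamma_j = a_j / (a_j + b_j), with value a_j b_j / (a_j + b_j).
  On W_n the constraint sum_m w_m = 1 pins gamma_1 = 1, so the first summand costs b_1 instead.
  The ordering of the theta_(n,j) makes the optimal tail sums nonincreasing in j, i.e. the
  optimal weights gamma_j - gamma_(j+1) lie in [0, 1].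
*)

theory Submission
  imports Defs "Jordan_Normal_Form.Determinant"
begin

section \<open>Tail sums and summation by parts\<close>

definition tail_sum :: "nat \<Rightarrow> (nat \<Rightarrow> real) \<Rightarrow> nat \<Rightarrow> real" where
  "tail_sum M w j = (\<Sum>m=j..M. w m)"

lemma tail_sum_eq_sum_if:
  "1 \<le> j \<Longrightarrow> tail_sum M w j = (\<Sum>m=1..M. if j \<le> m then w m else 0)"
proof -
  assume "1 \<le> j"
  then have "{m \<in> {1..M}. j \<le> m} = {j..M}" by auto
  then show ?thesis by (simp add: tail_sum_def sum.inter_filter[symmetric])
qed

lemma sum_increments:
  fixes f :: "nat \<Rightarrow> real"
  shows "f 0 = 0 \<Longrightarrow> (\<Sum>j=1..M. f j - f (j - 1)) = f M"
  by (induction M) (simp_all add: sum.cl_ivl_Suc)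

lemma eq_sum_increments_if:
  fixes f :: "nat \<Rightarrow> real"
  assumes "f 0 = 0" "m \<le> M"
  shows "f m = (\<Sum>j=1..M. if j \<le> m then f j - f (j - 1) else 0)"
proof -
  have "{j \<in> {1..M}. j \<le> m} = {1..m}" using assms(2) by auto
  then have "(\<Sum>j=1..M. if j \<le> m then f j - f (j - 1) else 0) = (\<Sum>j=1..m. f j - f (j - 1))"
    by (simp add: sum.inter_filter[symmetric])
  also have "\<dots> = f m" using assms(1) by (rule sum_increments)
  finally show ?thesis by simp
qed

lemma sum_by_parts_tail_sum:
  fixes f w :: "nat \<Rightarrow> real"
  assumes "f 0 = 0"
  shows "(\<Sum>m=1..M. w m * f m) = (\<Sum>j=1..M. (f j - f (j - 1)) * tail_sum M w j)"
proof -
  have "(\<Sum>m=1..M. w m * f m)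
      = (\<Sum>m=1..M. \<Sum>j=1..M. (f j - f (j - 1)) * (if j \<le> m then w m else 0))"
  proof (intro sum.cong refl)
    fix m assume "m \<in> {1..M}"
    then show "w m * f m = (\<Sum>j=1..M. (f j - f (j - 1)) * (if j \<le> m then w m else 0))"
      by (subst eq_sum_increments_if[of f m M, OF assms]) (auto simp: sum_distrib_left intro!: sum.cong)
  qed
  also have "\<dots> = (\<Sum>j=1..M. (f j - f (j - 1)) * tail_sum M w j)"
    by (subst sum.swap) (simp add: tail_sum_eq_sum_if sum_distrib_left)
  finally show ?thesis .
qed

lemma sum_by_parts_tail_sum_min:
  fixes f w :: "nat \<Rightarrow> real"
  assumes "f 0 = 0"
  shows "(\<Sum>m=1..M. \<Sum>m'=1..M. w m * w m' * f (min m m'))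
       = (\<Sum>j=1..M. (f j - f (j - 1)) * (tail_sum M w j)\<^sup>2)"
proof -
  let ?v = "\<lambda>j m. if j \<le> m then w m else 0"
  have "(\<Sum>m=1..M. \<Sum>m'=1..M. w m * w m' * f (min m m'))
      = (\<Sum>m=1..M. \<Sum>m'=1..M. \<Sum>j=1..M. (f j - f (j - 1)) * (?v j m * ?v j m'))"
  proof (intro sum.cong refl)
    fix m m' assume "m \<in> {1..M}" "m' \<in> {1..M}"
    then show "w m * w m' * f (min m m') = (\<Sum>j=1..M. (f j - f (j - 1)) * (?v j m * ?v j m'))"
      by (subst eq_sum_increments_if[of f "min m m'" M, OF assms]) (auto simp: sum_distrib_left intro!: sum.cong)
  qed
  also have "\<dots> = (\<Sum>j=1..M. (f j - f (j - 1)) * ((\<Sum>m=1..M. ?v j m) * (\<Sum>m'=1..M. ?v j m')))"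
    unfolding sum_product by (subst sum.swap, subst (2) sum.swap) (simp add: sum_distrib_left)
  also have "\<dots> = (\<Sum>j=1..M. (f j - f (j - 1)) * (tail_sum M w j)\<^sup>2)"
    by (intro sum.cong refl) (simp add: tail_sum_eq_sum_if power2_eq_square)
  finally show ?thesis .
qed

lemma quadratic_risk_tail_sum_form:
  fixes s t w :: "nat \<Rightarrow> real"
  assumes "s 0 = 0" "t 0 = 0"
  shows "(\<Sum>m=1..M. \<Sum>m'=1..M. w m * w m' * (s (min m m') + t (min m m')))
           - 2 * (\<Sum>m=1..M. w m * s m) + c
       = (\<Sum>j=1..M. (s j - s (j - 1)) * (1 - tail_sum M w j)\<^sup>2 + (t j - t (j - 1)) * (tail_sum M w j)\<^sup>2)
           + (c - s M)"
proof -
  define \<gamma> where "\<gamma> = tail_sum M w"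
  define a where "a j = s j - s (j - 1)" for j
  define b where "b j = t j - t (j - 1)" for j
  have "(\<Sum>m=1..M. \<Sum>m'=1..M. w m * w m' * (s (min m m') + t (min m m')))
      = (\<Sum>j=1..M. (a j + b j) * (\<gamma> j)\<^sup>2)"
    using sum_by_parts_tail_sum_min[where f="\<lambda>k. s k + t k" and M=M and w=w] assms
    by (simp add: a_def b_def \<gamma>_def algebra_simps)
  moreover have "(\<Sum>m=1..M. w m * s m) = (\<Sum>j=1..M. a j * \<gamma> j)"
    using sum_by_parts_tail_sum[where f=s and M=M and w=w] assms by (simp add: a_def \<gamma>_def)
  moreover have "s M = (\<Sum>j=1..M. a j)" using sum_increments[of s M] assms by (simp add: a_def)
  moreover have "a j * (1 - \<gamma> j)\<^sup>2 + b j * (\<gamma> j)\<^sup>2 = (a j + b j) * (\<gamma> j)\<^sup>2 - 2 * (a j * \<gamma> j) + a j" for j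
    by (simp add: power2_eq_square algebra_simps)
  ultimately show ?thesis
    unfolding a_def[symmetric] b_def[symmetric] \<gamma>_def[symmetric]
    by (simp add: sum.distrib sum_subtractf sum_distrib_left)
qed

lemma tail_sum_of_decrements:
  fixes g :: "nat \<Rightarrow> real"
  assumes "j \<le> M"
  shows "tail_sum M (\<lambda>m. if m < M then g m - g (Suc m) else g M) j = g j"
proof -
  define h where "h m = (if m \<le> M then g m else 0)" for m
  have "tail_sum M (\<lambda>m. if m < M then g m - g (Suc m) else g M) j = - (\<Sum>m=j..M. h (Suc m) - h m)"
    unfolding tail_sum_def sum_negf[symmetric] by (intro sum.cong refl) (auto simp: h_def)
  also have "\<dots> = g j" using assms by (subst sum_Suc_diff) (auto simp: h_def)
  finally show ?thesis .
qed

lemma decrements_in_Qset: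
  fixes g :: "nat \<Rightarrow> real"
  assumes "\<forall>j\<in>{1..M}. 0 \<le> g j \<and> g j \<le> 1" and "\<forall>m\<in>{1..<M}. g (Suc m) \<le> g m"
  shows "(\<lambda>m. if m < M then g m - g (Suc m) else g M) \<in> Qset M"
  unfolding Qset_def
proof (intro CollectI ballI)
  fix m assume m: "m \<in> {1..M}"
  show "0 \<le> (if m < M then g m - g (Suc m) else g M) \<and> (if m < M then g m - g (Suc m) else g M) \<le> 1"
  proof (cases "m < M")
    case True
    then have "g (Suc m) \<le> g m" "0 \<le> g (Suc m)" "g m \<le> 1" using assms m by auto
    with True show ?thesis by simp
  next
    case False
    then show ?thesis using assms m by auto
  qed
qed

lemma Wset_iff_tail_sum: "w \<in> Wset M \<longleftrightarrow> w \<in> Qset M \<and> tail_sum M w 1 = 1"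
  by (simp add: Wset_def Qset_def tail_sum_def)

section \<open>Optimal shrinkage\<close>

lemma shrinkage_loss_ge:
  fixes a b g :: real
  assumes "0 < a + b"
  shows "a * b / (a + b) \<le> a * (1 - g)\<^sup>2 + b * g\<^sup>2"
proof -
  have "(a + b) * (a * (1 - g)\<^sup>2 + b * g\<^sup>2) = a * b + ((a + b) * g - a)\<^sup>2"
    by (simp add: power2_eq_square algebra_simps)
  then have "a * b \<le> (a + b) * (a * (1 - g)\<^sup>2 + b * g\<^sup>2)" by simp
  with assms show ?thesis by (simp add: divide_le_eq mult.commute)
qed

lemma shrinkage_loss_at_optimum:
  fixes a b :: real
  assumes "0 < a + b"
  shows "a * (1 - a / (a + b))\<^sup>2 + b * (a / (a + b))\<^sup>2 = a * b / (a + b)"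
proof -
  have "1 - a / (a + b) = b / (a + b)" using assms by (simp add: field_simps)
  moreover have "a * (b / (a + b))\<^sup>2 + b * (a / (a + b))\<^sup>2 = a * b * (a + b) / (a + b)\<^sup>2"
    by (simp add: power2_eq_square add_divide_distrib algebra_simps)
  ultimately show ?thesis using assms by (simp add: power2_eq_square)
qed

lemma shrinkage_factor_mono:
  fixes a b a' b' c :: real
  assumes "0 \<le> a" "0 < b" "0 \<le> a'" "0 < b'" "0 < c" "a' / (c * b') \<le> a / (c * b)"
  shows "a' / (a' + b') \<le> a / (a + b)"
proof -
  have "a' * b \<le> a * b'" using assms by (simp add: divide_simps)
  then have "a' * (a + b) \<le> a * (a' + b')" by (simp add: algebra_simps)
  then show ?thesis using assms by (simp add: divide_simps add_nonneg_pos)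
qed

lemma shrinkage_gap:
  fixes a b :: real
  assumes "0 \<le> a" "0 < b"
  shows "b - a * b / (a + b) = b\<^sup>2 / (a + b)" "b\<^sup>2 / (a + b) \<le> b"
  using assms by (simp_all add: field_simps power2_eq_square add_nonneg_pos mult_right_mono)

definition tail_loss :: "nat \<Rightarrow> (nat \<Rightarrow> real) \<Rightarrow> (nat \<Rightarrow> real) \<Rightarrow> (nat \<Rightarrow> real) \<Rightarrow> real" where
  "tail_loss M a b w = (\<Sum>j=1..M. a j * (1 - tail_sum M w j)\<^sup>2 + b j * (tail_sum M w j)\<^sup>2)"

lemma tail_loss_min_Qset:
  fixes a b :: "nat \<Rightarrow> real"
  assumes ab: "\<forall>j\<in>{1..M}. 0 \<le> a j \<and> 0 < b j"
    and mono: "\<forall>m\<in>{1..<M}. a (Suc m) / (a (Suc m) + b (Suc m)) \<le> a m / (a m + b m)"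
  shows "\<exists>w\<in>Qset M. tail_loss M a b w = (\<Sum>j=1..M. a j * b j / (a j + b j))"
    "\<forall>w. (\<Sum>j=1..M. a j * b j / (a j + b j)) \<le> tail_loss M a b w"
proof -
  define c where "c m = a m / (a m + b m)" for m
  define w where "w m = (if m < M then c m - c (Suc m) else c M)" for m
  have pos: "0 < a j + b j" if "j \<in> {1..M}" for j using ab that by (simp add: add_nonneg_pos)
  have "\<forall>j\<in>{1..M}. 0 \<le> c j \<and> c j \<le> 1" "\<forall>m\<in>{1..<M}. c (Suc m) \<le> c m"
    using ab mono by (auto simp: c_def divide_le_eq)
  then have "w \<in> Qset M" unfolding w_def by (rule decrements_in_Qset)
  moreover have "tail_loss M a b w = (\<Sum>j=1..M. a j * b j / (a j + b j))"
    unfolding tail_loss_def w_def using pos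
    by (intro sum.cong refl) (simp add: tail_sum_of_decrements c_def shrinkage_loss_at_optimum)
  ultimately show "\<exists>w\<in>Qset M. tail_loss M a b w = (\<Sum>j=1..M. a j * b j / (a j + b j))" by blast
  show "\<forall>w. (\<Sum>j=1..M. a j * b j / (a j + b j)) \<le> tail_loss M a b w"
    unfolding tail_loss_def using pos by (auto intro!: sum_mono shrinkage_loss_ge)
qed

lemma tail_loss_min_Wset:
  fixes a b \<gamma> :: "nat \<Rightarrow> real"
  assumes M: "1 \<le> M" and ab: "\<forall>j\<in>{1..M}. 0 \<le> a j \<and> 0 < b j"
    and \<gamma>: "\<gamma> 1 = 1" "\<forall>j\<in>{2..M}. \<gamma> j = a j / (a j + b j)"
    and mono: "\<forall>m\<in>{2..<M}. a (Suc m) / (a (Suc m) + b (Suc m)) \<le> a m / (a m + b m)"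
  defines "wstar \<equiv> \<lambda>m. if m < M then \<gamma> m - \<gamma> (Suc m) else \<gamma> M"
  shows "wstar \<in> Wset M" "tail_loss M a b wstar = b 1 + (\<Sum>j=2..M. a j * b j / (a j + b j))"
    "\<forall>w\<in>Wset M. b 1 + (\<Sum>j=2..M. a j * b j / (a j + b j)) \<le> tail_loss M a b w"
proof -
  have pos: "0 < a j + b j" if "j \<in> {1..M}" for j using ab that by (simp add: add_nonneg_pos)
  have split: "tail_loss M a b w = a 1 * (1 - tail_sum M w 1)\<^sup>2 + b 1 * (tail_sum M w 1)\<^sup>2
      + (\<Sum>j=2..M. a j * (1 - tail_sum M w j)\<^sup>2 + b j * (tail_sum M w j)\<^sup>2)" for w
    using M by (simp add: tail_loss_def sum.atLeast_Suc_atMost numeral_2_eq_2)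
  have \<gamma>01: "0 \<le> \<gamma> j \<and> \<gamma> j \<le> 1" if "j \<in> {1..M}" for j
  proof (cases "j = 1")
    case False
    then have "\<gamma> j = a j / (a j + b j)" "0 \<le> a j" "0 < b j" using ab \<gamma> that by auto
    then show ?thesis by (simp add: divide_le_eq)
  qed (use \<gamma> in simp)
  moreover have \<gamma>_mono: "\<gamma> (Suc m) \<le> \<gamma> m" if "m \<in> {1..<M}" for m
  proof (cases "m = 1")
    case True
    then show ?thesis using \<gamma>01[of 2] \<gamma>(1) that by (simp add: numeral_2_eq_2)
  next
    case False
    then show ?thesis using \<gamma>(2) mono that by simp
  qed
  ultimately have "wstar \<in> Qset M"
    unfolding wstar_def by (intro decrements_in_Qset ballI) (simp_all add: \<gamma>01 \<gamma>_mono)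
  have tail: "tail_sum M wstar j = \<gamma> j" if "j \<le> M" for j
    unfolding wstar_def using that by (rule tail_sum_of_decrements)
  show "wstar \<in> Wset M"
    using \<open>wstar \<in> Qset M\<close> tail[of 1] M \<gamma>(1) by (simp add: Wset_iff_tail_sum)
  have "(\<Sum>j=2..M. a j * (1 - tail_sum M wstar j)\<^sup>2 + b j * (tail_sum M wstar j)\<^sup>2)
      = (\<Sum>j=2..M. a j * b j / (a j + b j))"
    using tail pos \<gamma>(2) by (intro sum.cong refl) (simp add: shrinkage_loss_at_optimum)
  then show "tail_loss M a b wstar = b 1 + (\<Sum>j=2..M. a j * b j / (a j + b j))"
    using split tail[of 1] M \<gamma>(1) by simp
  show "\<forall>w\<in>Wset M. b 1 + (\<Sum>j=2..M. a j * b j / (a j + b j)) \<le> tail_loss M a b w"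
  proof
    fix w assume "w \<in> Wset M"
    moreover have "(\<Sum>j=2..M. a j * b j / (a j + b j))
        \<le> (\<Sum>j=2..M. a j * (1 - tail_sum M w j)\<^sup>2 + b j * (tail_sum M w j)\<^sup>2)"
      using pos by (intro sum_mono shrinkage_loss_ge) auto
    ultimately show "b 1 + (\<Sum>j=2..M. a j * b j / (a j + b j)) \<le> tail_loss M a b w"
      using split by (simp add: Wset_iff_tail_sum)
  qed
qed

lemma tail_loss_minima:
  fixes a b :: "nat \<Rightarrow> real" and R :: "(nat \<Rightarrow> real) \<Rightarrow> real"
  assumes M: "2 \<le> M"
    and ab: "\<forall>j\<in>{1..M}. 0 \<le> a j \<and> 0 < b j"
    and mono: "\<forall>m\<in>{1..<M}. a (Suc m) / (a (Suc m) + b (Suc m)) \<le> a m / (a m + b m)"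
    and R: "\<And>w. R w = tail_loss M a b w + r"
  shows
    "let minW = b 1 + (\<Sum>m=2..M. a m * b m / (a m + b m)) + r;
         minQ = (\<Sum>m=1..M. a m * b m / (a m + b m)) + r;
         \<gamma> = (\<lambda>m. if m = 1 then 1 else a m / (a m + b m));
         wstar = (\<lambda>m. if m < M then \<gamma> m - \<gamma> (Suc m) else \<gamma> M)
     in wstar \<in> Wset M \<and> R wstar = minW \<and> (\<forall>w\<in>Wset M. minW \<le> R w)
        \<and> (\<exists>w\<in>Qset M. R w = minQ) \<and> (\<forall>w\<in>Qset M. minQ \<le> R w)
        \<and> minW - minQ = (b 1)\<^sup>2 / (a 1 + b 1) \<and> minW - minQ \<le> b 1"
proof -
  have "(\<Sum>m=1..M. a m * b m / (a m + b m)) = a 1 * b 1 / (a 1 + b 1) + (\<Sum>m=2..M. a m * b m / (a m + b m))"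
    using M by (simp add: sum.atLeast_Suc_atMost numeral_2_eq_2)
  then show ?thesis
    using tail_loss_min_Wset[of M a b "\<lambda>m. if m = 1 then 1 else a m / (a m + b m)"]
      tail_loss_min_Qset[OF ab mono] shrinkage_gap[of "a 1" "b 1"] ab mono M
    unfolding Let_def R by auto
qed

section \<open>Traces, quadratic forms and linear combinations of matrices\<close>

lemma mtrace_eq_sum:
  fixes A B :: "real mat"
  assumes "A \<in> carrier_mat r c" "B \<in> carrier_mat c r"
  shows "mtrace (A * B) = (\<Sum>i<r. \<Sum>k<c. A $$ (i, k) * B $$ (k, i))"
  using assms by (simp add: mtrace_def scalar_prod_def atLeast0LessThan)

lemma mtrace_mult_comm:
  fixes A B :: "real mat"
  assumes "A \<in> carrier_mat r c" "B \<in> carrier_mat c r"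
  shows "mtrace (A * B) = mtrace (B * A)"
  using assms by (simp add: mtrace_eq_sum[OF assms] mtrace_eq_sum[OF assms(2,1)] mult.commute sum.swap[of _ "{..<r}"])

lemma mtrace_minus:
  fixes A B :: "real mat"
  assumes "A \<in> carrier_mat n n" "B \<in> carrier_mat n n"
  shows "mtrace (A - B) = mtrace A - mtrace B"
  using assms by (simp add: mtrace_def sum_subtractf)

lemma mtrace_minus_mult:
  fixes A B C :: "real mat"
  assumes "A \<in> carrier_mat n n" "B \<in> carrier_mat n n" "C \<in> carrier_mat n n"
  shows "mtrace ((A - B) * C) = mtrace (A * C) - mtrace (B * C)"
  using assms by (simp add: minus_mult_distrib_mat mtrace_minus[of _ n])

lemma scalar_prod_mult_mat_vec_eq_sum:
  fixes A :: "real mat"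
  assumes "A \<in> carrier_mat n n" "u \<in> carrier_vec n" "v \<in> carrier_vec n"
  shows "u \<bullet> (A *\<^sub>v v) = (\<Sum>i<n. \<Sum>k<n. A $$ (i, k) * (u $ i * v $ k))"
  using assms by (simp add: scalar_prod_def atLeast0LessThan sum_distrib_left mult_ac)

lemma quadratic_form_minus:
  fixes A B :: "real mat"
  assumes "A \<in> carrier_mat n n" "B \<in> carrier_mat n n" "v \<in> carrier_vec n"
  shows "v \<bullet> ((A - B) *\<^sub>v v) = v \<bullet> (A *\<^sub>v v) - v \<bullet> (B *\<^sub>v v)"
  using assms by (simp add: minus_mult_distrib_mat_vec scalar_prod_minus_distrib[of _ n])

lemma scalar_prod_self_nonneg: "0 \<le> (v :: real vec) \<bullet> v"
  by (simp add: scalar_prod_def sum_nonneg)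

lemma scalar_prod_self_eq_0:
  fixes v :: "real vec"
  assumes "v \<in> carrier_vec n" "v \<bullet> v = 0"
  shows "v = 0\<^sub>v n"
proof -
  have "(\<Sum>i\<in>{0..<n}. v $ i * v $ i) = 0" using assms by (simp add: scalar_prod_def)
  then have "\<forall>i\<in>{0..<n}. v $ i * v $ i = 0" by (subst (asm) sum_nonneg_eq_0_iff) auto
  then show ?thesis using assms by (intro eq_vecI) auto
qed

lemma residual_expand:
  fixes A :: "real mat"
  assumes A: "A \<in> carrier_mat n n" and \<mu>: "\<mu> \<in> carrier_vec n"
  shows "(A *\<^sub>v \<mu> - \<mu>) \<bullet> (A *\<^sub>v \<mu> - \<mu>)
       = \<mu> \<bullet> ((transpose_mat A * A) *\<^sub>v \<mu>) - 2 * (\<mu> \<bullet> (A *\<^sub>v \<mu>)) + \<mu> \<bullet> \<mu>"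
proof -
  have A\<mu>: "A *\<^sub>v \<mu> \<in> carrier_vec n" using A \<mu> by simp
  have "(A *\<^sub>v \<mu>) \<bullet> (A *\<^sub>v \<mu>) = \<mu> \<bullet> ((transpose_mat A * A) *\<^sub>v \<mu>)"
    using transpose_vec_mult_scalar[OF A \<mu> A\<mu>] A \<mu> by (simp add: comm_scalar_prod[of _ n \<mu>])
  moreover have "(A *\<^sub>v \<mu>) \<bullet> \<mu> = \<mu> \<bullet> (A *\<^sub>v \<mu>)" using A\<mu> \<mu> by (rule comm_scalar_prod)
  ultimately show ?thesis using A\<mu> \<mu>
    by (simp add: minus_scalar_prod_distrib[of _ n] scalar_prod_minus_distrib[of _ n])
qed

lemma mtrace_sandwich:
  fixes B \<Omega> :: "real mat"
  assumes "B \<in> carrier_mat r n" "\<Omega> \<in> carrier_mat n n"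
  shows "mtrace (B * \<Omega> * transpose_mat B) = (\<Sum>i<r. row B i \<bullet> (\<Omega> *\<^sub>v row B i))"
proof -
  have "B * \<Omega> * transpose_mat B = B * (\<Omega> * transpose_mat B)" using assms by auto
  then show ?thesis using assms unfolding mtrace_def by (auto intro!: sum.cong)
qed

lemma quadratic_form_idempotent_nonneg:
  fixes D :: "real mat"
  assumes "D \<in> carrier_mat n n" "transpose_mat D = D" "D * D = D" "v \<in> carrier_vec n"
  shows "0 \<le> v \<bullet> (D *\<^sub>v v)"
proof -
  have "v \<bullet> (D *\<^sub>v v) = v \<bullet> (transpose_mat D *\<^sub>v (D *\<^sub>v v))"
    using assms by (metis assoc_mult_mat_vec)
  also have "\<dots> = (D *\<^sub>v v) \<bullet> (D *\<^sub>v v)"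
    using assms transpose_vec_mult_scalar[of D n n "D *\<^sub>v v" v] by (simp add: comm_scalar_prod[of _ n])
  finally show ?thesis by (simp add: scalar_prod_self_nonneg)
qed

lemma mtrace_idempotent_pos:
  fixes D \<Omega> :: "real mat"
  assumes D: "D \<in> carrier_mat n n" "transpose_mat D = D" "D * D = D" "D \<noteq> 0\<^sub>m n n"
    and \<Omega>: "\<Omega> \<in> carrier_mat n n" "\<forall>v\<in>carrier_vec n. v \<noteq> 0\<^sub>v n \<longrightarrow> v \<bullet> (\<Omega> *\<^sub>v v) > 0"
  shows "0 < mtrace (D * \<Omega>)"
proof -
  have "mtrace (D * \<Omega>) = mtrace (D * (D * \<Omega>))" using D \<Omega> by (metis assoc_mult_mat)
  also have "\<dots> = mtrace (D * \<Omega> * transpose_mat D)"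
    using D \<Omega> by (simp add: mtrace_mult_comm[of D n n "D * \<Omega>"])
  also have "\<dots> = (\<Sum>i<n. row D i \<bullet> (\<Omega> *\<^sub>v row D i))" by (rule mtrace_sandwich[OF D(1) \<Omega>(1)])
  finally have tr: "mtrace (D * \<Omega>) = (\<Sum>i<n. row D i \<bullet> (\<Omega> *\<^sub>v row D i))" .
  obtain i where i: "i < n" "row D i \<noteq> 0\<^sub>v n"
  proof (rule ccontr)
    assume "\<not> thesis"
    then have "\<forall>i<n. row D i = 0\<^sub>v n" using that by blast
    moreover have "D $$ (k, l) = row D k $ l" if "k < n" "l < n" for k l using that D by simp
    ultimately have "D = 0\<^sub>m n n" using D by (intro eq_matI) auto
    with D show False by simp
  qed
  have "0 \<le> row D k \<bullet> (\<Omega> *\<^sub>v row D k)" if "k < n" for k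
    using \<Omega> D that by (cases "row D k = 0\<^sub>v n") (auto intro: less_imp_le)
  moreover have "0 < row D i \<bullet> (\<Omega> *\<^sub>v row D i)" using \<Omega> D i by auto
  ultimately show ?thesis unfolding tr using i by (intro sum_pos2[of _ i]) auto
qed

definition mat_lincomb :: "nat \<Rightarrow> ('i \<Rightarrow> real) \<Rightarrow> ('i \<Rightarrow> real mat) \<Rightarrow> 'i set \<Rightarrow> real mat" where
  "mat_lincomb n c C S = mat n n (\<lambda>(i, k). \<Sum>m\<in>S. c m * C m $$ (i, k))"

lemma mat_lincomb_carrier [simp]: "mat_lincomb n c C S \<in> carrier_mat n n"
  by (simp add: mat_lincomb_def)

lemma dim_mat_lincomb [simp]:
  "dim_row (mat_lincomb n c C S) = n" "dim_col (mat_lincomb n c C S) = n"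
  by (simp_all add: mat_lincomb_def)

lemma index_mat_lincomb [simp]:
  "i < n \<Longrightarrow> k < n \<Longrightarrow> mat_lincomb n c C S $$ (i, k) = (\<Sum>m\<in>S. c m * C m $$ (i, k))"
  by (simp add: mat_lincomb_def)

lemma mat_lincomb_cong:
  "(\<And>m. m \<in> S \<Longrightarrow> c m = c' m) \<Longrightarrow> (\<And>m. m \<in> S \<Longrightarrow> C m = C' m)
    \<Longrightarrow> mat_lincomb n c C S = mat_lincomb n c' C' S"
  by (simp add: mat_lincomb_def)

lemma transpose_mat_lincomb:
  assumes "\<forall>m\<in>S. C m \<in> carrier_mat n n"
  shows "transpose_mat (mat_lincomb n c C S) = mat_lincomb n c (\<lambda>m. transpose_mat (C m)) S"
  using assms by (intro eq_matI) (auto intro!: sum.cong)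

lemma mult_mat_lincomb:
  assumes "\<forall>j\<in>S. C j \<in> carrier_mat n n" "\<forall>k\<in>T. D k \<in> carrier_mat n n"
  shows "mat_lincomb n c C S * mat_lincomb n d D T
       = mat_lincomb n (\<lambda>(j, k). c j * d k) (\<lambda>(j, k). C j * D k) (S \<times> T)"
proof (rule eq_matI)
  fix i l assume "i < dim_row (mat_lincomb n (\<lambda>(j, k). c j * d k) (\<lambda>(j, k). C j * D k) (S \<times> T))"
    and "l < dim_col (mat_lincomb n (\<lambda>(j, k). c j * d k) (\<lambda>(j, k). C j * D k) (S \<times> T))"
  then have il: "i < n" "l < n" by auto
  have "(mat_lincomb n c C S * mat_lincomb n d D T) $$ (i, l)
      = (\<Sum>q<n. (\<Sum>j\<in>S. c j * C j $$ (i, q)) * (\<Sum>k\<in>T. d k * D k $$ (q, l)))"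
    using il by (simp add: scalar_prod_def atLeast0LessThan)
  also have "\<dots> = (\<Sum>q<n. \<Sum>j\<in>S. \<Sum>k\<in>T. c j * d k * (C j $$ (i, q) * D k $$ (q, l)))"
    by (simp add: sum_product mult_ac)
  also have "\<dots> = (\<Sum>j\<in>S. \<Sum>k\<in>T. \<Sum>q<n. c j * d k * (C j $$ (i, q) * D k $$ (q, l)))"
    by (subst sum.swap) (simp add: sum.swap[of _ "{..<n}"])
  also have "\<dots> = (\<Sum>j\<in>S. \<Sum>k\<in>T. c j * d k * (\<Sum>q<n. C j $$ (i, q) * D k $$ (q, l)))"
    by (simp add: sum_distrib_left)
  also have "\<dots> = mat_lincomb n (\<lambda>(j, k). c j * d k) (\<lambda>(j, k). C j * D k) (S \<times> T) $$ (i, l)"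
    unfolding index_mat_lincomb[OF il] sum.cartesian_product
  proof (intro sum.cong refl, clarify)
    fix j k assume "j \<in> S" "k \<in> T"
    then have "C j \<in> carrier_mat n n" "D k \<in> carrier_mat n n" using assms by auto
    then show "c j * d k * (\<Sum>q<n. C j $$ (i, q) * D k $$ (q, l)) = c j * d k * (C j * D k) $$ (i, l)"
      using il by (simp add: scalar_prod_def atLeast0LessThan)
  qed
  finally show "(mat_lincomb n c C S * mat_lincomb n d D T) $$ (i, l) = \<dots>" .
qed auto

lemma sum_entries_lincomb:
  fixes c :: "'i \<Rightarrow> real"
  shows "(\<Sum>i<n. \<Sum>k<n. (\<Sum>m\<in>S. c m * C m $$ (i, k)) * K i k)
     = (\<Sum>m\<in>S. c m * (\<Sum>i<n. \<Sum>k<n. C m $$ (i, k) * K i k))"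
proof -
  have "(\<Sum>i<n. \<Sum>k<n. (\<Sum>m\<in>S. c m * C m $$ (i, k)) * K i k)
      = (\<Sum>i<n. \<Sum>m\<in>S. \<Sum>k<n. c m * (C m $$ (i, k) * K i k))"
    by (simp add: sum_distrib_right sum.swap[of _ "{..<n}" S] mult.assoc)
  also have "\<dots> = (\<Sum>m\<in>S. c m * (\<Sum>i<n. \<Sum>k<n. C m $$ (i, k) * K i k))"
    by (subst sum.swap) (simp add: sum_distrib_left)
  finally show ?thesis .
qed

lemma scalar_prod_mat_lincomb:
  assumes "\<forall>m\<in>S. C m \<in> carrier_mat n n" "u \<in> carrier_vec n" "v \<in> carrier_vec n"
  shows "u \<bullet> (mat_lincomb n c C S *\<^sub>v v) = (\<Sum>m\<in>S. c m * (u \<bullet> (C m *\<^sub>v v)))"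
  using assms by (simp add: scalar_prod_mult_mat_vec_eq_sum[of _ n] sum_entries_lincomb)

lemma mtrace_mat_lincomb_mult:
  assumes "\<forall>m\<in>S. C m \<in> carrier_mat n n" "B \<in> carrier_mat n n"
  shows "mtrace (mat_lincomb n c C S * B) = (\<Sum>m\<in>S. c m * mtrace (C m * B))"
  using assms by (simp add: mtrace_eq_sum[of _ n n] sum_entries_lincomb)

section \<open>Nested hat matrices\<close>

definition projection_chain :: "nat \<Rightarrow> nat \<Rightarrow> (nat \<Rightarrow> real mat) \<Rightarrow> bool" where
  "projection_chain n M P \<longleftrightarrow> P 0 = 0\<^sub>m n n
     \<and> (\<forall>m\<le>M. P m \<in> carrier_mat n n \<and> transpose_mat (P m) = P m)
     \<and> (\<forall>i\<le>M. \<forall>j\<le>M. P i * P j = P (min i j))"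

lemma projection_chain_gram:
  assumes "projection_chain n M P"
  shows "transpose_mat (mat_lincomb n w P {1..M}) * mat_lincomb n w P {1..M}
       = mat_lincomb n (\<lambda>(m, m'). w m * w m') (\<lambda>(m, m'). P (min m m')) ({1..M} \<times> {1..M})"
proof -
  have P: "\<forall>m\<in>{1..M}. P m \<in> carrier_mat n n \<and> transpose_mat (P m) = P m"
    using assms by (simp add: projection_chain_def)
  then have "transpose_mat (mat_lincomb n w P {1..M}) = mat_lincomb n w P {1..M}"
    by (subst transpose_mat_lincomb) (auto intro: mat_lincomb_cong)
  then have "transpose_mat (mat_lincomb n w P {1..M}) * mat_lincomb n w P {1..M}
      = mat_lincomb n (\<lambda>(m, m'). w m * w m') (\<lambda>(m, m'). P m * P m') ({1..M} \<times> {1..M})"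
    using P by (simp add: mult_mat_lincomb)
  also have "\<dots> = mat_lincomb n (\<lambda>(m, m'). w m * w m') (\<lambda>(m, m'). P (min m m')) ({1..M} \<times> {1..M})"
    using assms by (intro mat_lincomb_cong) (auto simp: projection_chain_def)
  finally show ?thesis .
qed

lemma projection_chain_increment:
  assumes "projection_chain n M P" "1 \<le> j" "j \<le> M"
  defines "D \<equiv> P j - P (j - 1)"
  shows "D \<in> carrier_mat n n" "transpose_mat D = D" "D * D = D"
proof -
  have P: "P j \<in> carrier_mat n n" "P (j - 1) \<in> carrier_mat n n"
    "transpose_mat (P j) = P j" "transpose_mat (P (j - 1)) = P (j - 1)"
    "P j * P j = P j" "P j * P (j - 1) = P (j - 1)"
    "P (j - 1) * P j = P (j - 1)" "P (j - 1) * P (j - 1) = P (j - 1)"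
    using assms by (auto simp: projection_chain_def min_def)
  then show "D \<in> carrier_mat n n" "transpose_mat D = D" by (simp_all add: D_def minus_carrier_mat transpose_minus)
  have "D * D = P j * D - P (j - 1) * D"
    unfolding D_def using P by (intro minus_mult_distrib_mat) auto
  also have "\<dots> = (P j * P j - P j * P (j - 1)) - (P (j - 1) * P j - P (j - 1) * P (j - 1))"
    unfolding D_def using P by (simp add: mult_minus_distrib_mat[of _ n n])
  also have "\<dots> = D" using P by (intro eq_matI) (auto simp: D_def)
  finally show "D * D = D" .
qed

lemma projection_chain_increment_nonneg:
  assumes "projection_chain n M P" "1 \<le> j" "j \<le> M" "v \<in> carrier_vec n"
  shows "0 \<le> v \<bullet> ((P j - P (j - 1)) *\<^sub>v v)"
  using projection_chain_increment[OF assms(1-3)] assms(4) by (intro quadratic_form_idempotent_nonneg)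

lemma projection_chain_increment_trace_pos:
  assumes "projection_chain n M P" "1 \<le> j" "j \<le> M" "P j \<noteq> P (j - 1)"
    and "\<Omega> \<in> carrier_mat n n" "\<forall>v\<in>carrier_vec n. v \<noteq> 0\<^sub>v n \<longrightarrow> v \<bullet> (\<Omega> *\<^sub>v v) > 0"
  shows "0 < mtrace ((P j - P (j - 1)) * \<Omega>)"
proof (rule mtrace_idempotent_pos[OF projection_chain_increment[OF assms(1-3)] _ assms(5,6)])
  have P: "P j \<in> carrier_mat n n" "P (j - 1) \<in> carrier_mat n n"
    using assms(1,3) by (auto simp: projection_chain_def)
  show "P j - P (j - 1) \<noteq> 0\<^sub>m n n"
  proof
    assume D0: "P j - P (j - 1) = 0\<^sub>m n n"
    have "P j $$ (i, k) = P (j - 1) $$ (i, k)" if "i < n" "k < n" for i k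
      using arg_cong[OF D0, of "\<lambda>D. D $$ (i, k)"] that P by simp
    then have "P j = P (j - 1)" using P by (intro eq_matI) auto
    with assms(4) show False ..
  qed
qed

lemma projection_chain_dim_pos:
  assumes "projection_chain n M P" "1 \<le> M" "P 1 \<noteq> P 0"
  shows "0 < n"
proof (rule ccontr)
  assume "\<not> 0 < n"
  moreover have "P 1 \<in> carrier_mat n n" "P 0 = 0\<^sub>m n n"
    using assms(1,2) by (auto simp: projection_chain_def)
  ultimately have "P 1 = P 0" by (intro eq_matI) auto
  with assms(3) show False ..
qed

definition full_column_rank :: "real mat \<Rightarrow> bool" where
  "full_column_rank A \<longleftrightarrow>
     (\<forall>v\<in>carrier_vec (dim_col A). A *\<^sub>v v = 0\<^sub>v (dim_row A) \<longrightarrow> v = 0\<^sub>v (dim_col A))"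

definition hat_mat :: "real mat \<Rightarrow> real mat" where
  "hat_mat A = A * the (mat_inverse (transpose_mat A * A)) * transpose_mat A"

lemma gram_mat_inverse:
  fixes A :: "real mat"
  assumes A: "A \<in> carrier_mat r k" and rank: "full_column_rank A"
  defines "G \<equiv> the (mat_inverse (transpose_mat A * A))"
  shows "G \<in> carrier_mat k k" "transpose_mat A * A * G = 1\<^sub>m k" "G * (transpose_mat A * A) = 1\<^sub>m k"
    "transpose_mat G = G"
proof -
  let ?AA = "transpose_mat A * A"
  have AA: "?AA \<in> carrier_mat k k" using A by auto
  have "det ?AA \<noteq> 0"
  proof
    assume "det ?AA = 0"
    then obtain v where v: "v \<in> carrier_vec k" "v \<noteq> 0\<^sub>v k" "?AA *\<^sub>v v = 0\<^sub>v k"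
      using det_0_iff_vec_prod_zero_field[OF AA] by auto
    have "(A *\<^sub>v v) \<bullet> (A *\<^sub>v v) = (?AA *\<^sub>v v) \<bullet> v"
      using A v transpose_vec_mult_scalar[of A r k v "A *\<^sub>v v"] by simp
    then have "A *\<^sub>v v = 0\<^sub>v r" using v A by (intro scalar_prod_self_eq_0) auto
    with rank v A show False by (auto simp: full_column_rank_def)
  qed
  then have "?AA \<in> Units (ring_mat TYPE(real) k ())" by (rule det_non_zero_imp_unit[OF AA])
  then obtain G' where "mat_inverse ?AA = Some G'"
    using mat_inverse(1)[OF AA, where b="()"] by (cases "mat_inverse ?AA") auto
  then show G: "G \<in> carrier_mat k k" "?AA * G = 1\<^sub>m k" "G * ?AA = 1\<^sub>m k"
    using mat_inverse(2)[OF AA] by (auto simp: G_def)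
  have "transpose_mat ?AA = ?AA" using A by (simp add: transpose_mult)
  then have GtAA: "transpose_mat G * ?AA = 1\<^sub>m k" using transpose_mult[OF AA G(1)] G(2) by simp
  have "transpose_mat G = transpose_mat G * (?AA * G)" using G by simp
  also have "\<dots> = transpose_mat G * ?AA * G" using G AA by (simp add: assoc_mult_mat[of _ k k])
  finally show "transpose_mat G = G" using GtAA G by simp
qed

lemma hat_mat_projection:
  fixes A :: "real mat"
  assumes A: "A \<in> carrier_mat r k" and rank: "full_column_rank A"
  shows "hat_mat A \<in> carrier_mat r r" "transpose_mat (hat_mat A) = hat_mat A"
    "hat_mat A * A = A" "mtrace (hat_mat A) = k"
proof -
  define G where "G = the (mat_inverse (transpose_mat A * A))"
  note G = gram_mat_inverse[OF A rank, folded G_def]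
  have H: "hat_mat A = A * G * transpose_mat A" by (simp add: hat_mat_def G_def)
  show "hat_mat A \<in> carrier_mat r r" using A G by (simp add: H)
  have AG: "A * G \<in> carrier_mat r k" using A G by auto
  have "transpose_mat (A * G * transpose_mat A) = A * transpose_mat (A * G)"
    using transpose_mult[OF AG, of "transpose_mat A" r] A by simp
  also have "transpose_mat (A * G) = G * transpose_mat A"
    using transpose_mult[OF A G(1)] G(4) by simp
  finally show "transpose_mat (hat_mat A) = hat_mat A" using A G by (simp add: H)
  have "A * G * transpose_mat A * A = A * G * (transpose_mat A * A)"
    using A AG by (intro assoc_mult_mat[of _ r k _ r]) auto
  also have "\<dots> = A * (G * (transpose_mat A * A))"
    using A G(1) by (intro assoc_mult_mat[of _ r k _ k]) auto
  finally have "A * G * transpose_mat A * A = A * (G * (transpose_mat A * A))" .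
  then show "hat_mat A * A = A" using A G(3) by (simp add: H)
  have "mtrace (A * G * transpose_mat A) = mtrace (transpose_mat A * (A * G))"
    using A G by (intro mtrace_mult_comm[of _ r k]) auto
  also have "\<dots> = mtrace (1\<^sub>m k)" using A G by (simp add: assoc_mult_mat[of _ k r])
  finally show "mtrace (hat_mat A) = k" by (simp add: H mtrace_def)
qed

lemma Xsub_carrier [simp]: "Xsub X k \<in> carrier_mat (dim_row X) k"
  by (simp add: Xsub_def)

lemma dim_Xsub [simp]: "dim_row (Xsub X k) = dim_row X" "dim_col (Xsub X k) = k"
  by (simp_all add: Xsub_def)

lemma mult_Xsub_prefix:
  assumes "H \<in> carrier_mat (dim_row X) (dim_row X)" "H * Xsub X l = Xsub X l" "k \<le> l"
  shows "H * Xsub X k = Xsub X k"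
proof (rule eq_matI)
  fix i j assume ij: "i < dim_row (Xsub X k)" "j < dim_col (Xsub X k)"
  then have "col (Xsub X k) j = col (Xsub X l) j" using assms(3) by (auto simp: Xsub_def col_def)
  moreover have "dim_row H = dim_row X" using assms(1) by simp
  ultimately have "(H * Xsub X k) $$ (i, j) = (H * Xsub X l) $$ (i, j)" using ij assms(3) by simp
  also have "\<dots> = Xsub X k $$ (i, j)" using ij assms(2,3) by (simp add: Xsub_def)
  finally show "(H * Xsub X k) $$ (i, j) = Xsub X k $$ (i, j)" .
qed (use assms in auto)

lemma hat_mat_Xsub_nested:
  assumes "full_column_rank (Xsub X k)" "full_column_rank (Xsub X l)" "k \<le> l"
  shows "hat_mat (Xsub X l) * hat_mat (Xsub X k) = hat_mat (Xsub X k)"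
proof -
  let ?n = "dim_row X" and ?Xk = "Xsub X k" and ?H = "hat_mat (Xsub X l)"
  define G where "G = the (mat_inverse (transpose_mat ?Xk * ?Xk))"
  have G: "G \<in> carrier_mat k k" using gram_mat_inverse(1)[OF Xsub_carrier assms(1)] by (simp add: G_def)
  have H: "?H \<in> carrier_mat ?n ?n" "?H * ?Xk = ?Xk"
    using hat_mat_projection[OF Xsub_carrier assms(2)] assms(3) by (auto intro: mult_Xsub_prefix)
  have "?H * (?Xk * G * transpose_mat ?Xk) = ?H * (?Xk * G) * transpose_mat ?Xk"
    using H mult_carrier_mat[OF Xsub_carrier G] by (intro assoc_mult_mat[symmetric, of _ ?n ?n _ k _ ?n]) auto
  also have "?H * (?Xk * G) = ?H * ?Xk * G"
    using H G by (intro assoc_mult_mat[symmetric, of _ ?n ?n _ k _ k]) auto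
  finally show ?thesis using H by (simp add: hat_mat_def G_def)
qed

lemma hatm_eq_hat_mat:
  "hatm X k = (if k = 0 then 0\<^sub>m (dim_row X) (dim_row X) else hat_mat (Xsub X k))"
  by (simp add: hatm_def hat_mat_def)

lemma hatm_projection:
  assumes "0 < k \<Longrightarrow> full_column_rank (Xsub X k)"
  shows "hatm X k \<in> carrier_mat (dim_row X) (dim_row X)" "transpose_mat (hatm X k) = hatm X k"
    "mtrace (hatm X k) = k"
  using hat_mat_projection[OF Xsub_carrier assms] by (auto simp: hatm_eq_hat_mat mtrace_def)

lemma hatm_nested:
  assumes "0 < k \<Longrightarrow> full_column_rank (Xsub X k)" "0 < l \<Longrightarrow> full_column_rank (Xsub X l)" "k \<le> l"
  shows "hatm X l * hatm X k = hatm X k" "hatm X k * hatm X l = hatm X k"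
proof -
  let ?n = "dim_row X"
  note H = hatm_projection[OF assms(1)] hatm_projection[OF assms(2)]
  show lk: "hatm X l * hatm X k = hatm X k"
    using H assms hat_mat_Xsub_nested[of X k l] by (cases "k = 0") (auto simp: hatm_eq_hat_mat)
  have "hatm X k * hatm X l = transpose_mat (hatm X l * hatm X k)"
    using H by (simp add: transpose_mult[of "hatm X l" ?n ?n "hatm X k" ?n])
  then show "hatm X k * hatm X l = hatm X k" using lk H by simp
qed

lemma lift_Suc_mono_le_upto:
  fixes f :: "nat \<Rightarrow> 'a :: order"
  assumes "\<forall>m<M. f m < f (Suc m)" "i \<le> j" "j \<le> M"
  shows "f i \<le> f j"
  using assms(2,3)
proof (induction j rule: dec_induct)
  case (step k)
  then show ?case using assms(1) order.strict_implies_order order.trans by (metis Suc_le_lessD)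
qed simp

lemma Pm_projection_chain:
  assumes \<nu>0: "\<nu> 0 = 0" and \<nu>_Suc: "\<forall>m<M. \<nu> m < \<nu> (Suc m)"
    and rank: "\<forall>m\<in>{1..M}. full_column_rank (Xsub X (\<nu> m))"
  shows "projection_chain (dim_row X) M (Pm X \<nu>)"
    "\<forall>j\<in>{1..M}. Pm X \<nu> j \<noteq> Pm X \<nu> (j - 1)"
proof -
  have rank': "full_column_rank (Xsub X (\<nu> m))" if "m \<le> M" "0 < \<nu> m" for m
    using rank that \<nu>0 by (cases m) auto
  note H = hatm_projection[OF rank'] and nested = hatm_nested[OF rank' rank']
  have "Pm X \<nu> i * Pm X \<nu> j = Pm X \<nu> (min i j)" if "i \<le> M" "j \<le> M" for i j
    using nested[of i j] nested[of j i] lift_Suc_mono_le_upto[OF \<nu>_Suc, of i j]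
      lift_Suc_mono_le_upto[OF \<nu>_Suc, of j i] that
    by (cases "i \<le> j") (auto simp: Pm_def min_def)
  then show "projection_chain (dim_row X) M (Pm X \<nu>)"
    using H \<nu>0 by (simp add: projection_chain_def Pm_def hatm_def)
  show "\<forall>j\<in>{1..M}. Pm X \<nu> j \<noteq> Pm X \<nu> (j - 1)"
  proof
    fix j assume "j \<in> {1..M}"
    then obtain k where k: "j = Suc k" "k < M" by (cases j) auto
    then have "mtrace (Pm X \<nu> j) \<noteq> mtrace (Pm X \<nu> (j - 1))"
      using H(3)[of j] H(3)[of k] \<nu>_Suc[rule_format, of k] by (simp add: Pm_def)
    then show "Pm X \<nu> j \<noteq> Pm X \<nu> (j - 1)" by metis
  qed
qed

section \<open>Expected squared error\<close>

lemma has_bochner_integral_centered_linear: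
  fixes \<epsilon> :: "'a \<Rightarrow> real vec"
  assumes dim: "\<forall>\<omega>\<in>space M. \<epsilon> \<omega> \<in> carrier_vec n"
    and int: "\<forall>i<n. integrable M (\<lambda>\<omega>. \<epsilon> \<omega> $ i)"
    and mean: "\<forall>i<n. (\<integral>\<omega>. \<epsilon> \<omega> $ i \<partial>M) = 0"
  shows "has_bochner_integral M (\<lambda>\<omega>. u \<bullet> \<epsilon> \<omega>) 0"
proof -
  have sum: "has_bochner_integral M (\<lambda>\<omega>. \<Sum>i<n. u $ i * \<epsilon> \<omega> $ i) (\<Sum>i<n. u $ i * 0)"
    using int mean by (intro has_bochner_integral_sum has_bochner_integral_mult_right)
      (metis has_bochner_integral_integrable lessThan_iff)
  have eq: "u \<bullet> \<epsilon> \<omega> = (\<Sum>i<n. u $ i * \<epsilon> \<omega> $ i)" if "\<omega> \<in> space M" for \<omega>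
  proof -
    have "\<epsilon> \<omega> \<in> carrier_vec n" using dim that by blast
    then show ?thesis by (simp add: scalar_prod_def atLeast0LessThan)
  qed
  show ?thesis by (rule has_bochner_integral_cong[THEN iffD2, OF refl _ _ sum]) (simp_all add: eq)
qed

lemma has_bochner_integral_quadratic_form:
  fixes \<epsilon> :: "'a \<Rightarrow> real vec"
  assumes dim: "\<forall>\<omega>\<in>space M. \<epsilon> \<omega> \<in> carrier_vec n"
    and int2: "\<forall>i<n. \<forall>j<n. integrable M (\<lambda>\<omega>. \<epsilon> \<omega> $ i * \<epsilon> \<omega> $ j)"
    and cov: "\<forall>i<n. \<forall>j<n. \<Omega> $$ (i, j) = (\<integral>\<omega>. \<epsilon> \<omega> $ i * \<epsilon> \<omega> $ j \<partial>M)"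
    and B: "B \<in> carrier_mat n n" and \<Omega>: "\<Omega> \<in> carrier_mat n n"
  shows "has_bochner_integral M (\<lambda>\<omega>. \<epsilon> \<omega> \<bullet> (B *\<^sub>v \<epsilon> \<omega>)) (mtrace (B * \<Omega>))"
proof -
  have sum: "has_bochner_integral M (\<lambda>\<omega>. \<Sum>i<n. \<Sum>k<n. B $$ (i, k) * (\<epsilon> \<omega> $ i * \<epsilon> \<omega> $ k))
      (\<Sum>i<n. \<Sum>k<n. B $$ (i, k) * \<Omega> $$ (i, k))"
    using int2 cov by (intro has_bochner_integral_sum has_bochner_integral_mult_right)
      (simp add: has_bochner_integral_integrable)
  have eq: "\<epsilon> \<omega> \<bullet> (B *\<^sub>v \<epsilon> \<omega>) = (\<Sum>i<n. \<Sum>k<n. B $$ (i, k) * (\<epsilon> \<omega> $ i * \<epsilon> \<omega> $ k))"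
    if "\<omega> \<in> space M" for \<omega>
    using dim that B by (simp add: scalar_prod_mult_mat_vec_eq_sum)
  have tr: "mtrace (B * \<Omega>) = (\<Sum>i<n. \<Sum>k<n. B $$ (i, k) * \<Omega> $$ (i, k))"
    using cov B \<Omega> by (simp add: mtrace_eq_sum[of _ n n] mult.commute)
  show ?thesis by (rule has_bochner_integral_cong[THEN iffD2, OF refl _ _ sum]) (simp_all add: eq tr)
qed

lemma squared_error_expand:
  fixes A :: "real mat"
  assumes A: "A \<in> carrier_mat n n" and \<mu>: "\<mu> \<in> carrier_vec n" and e: "e \<in> carrier_vec n"
  defines "c \<equiv> A *\<^sub>v \<mu> - \<mu>"
  shows "(let d = A *\<^sub>v (\<mu> + e) - \<mu> in d \<bullet> d)
       = c \<bullet> c + 2 * ((transpose_mat A *\<^sub>v c) \<bullet> e) + e \<bullet> ((transpose_mat A * A) *\<^sub>v e)"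
proof -
  have c: "c \<in> carrier_vec n" using A \<mu> by (simp add: c_def)
  have Ae: "A *\<^sub>v e \<in> carrier_vec n" using A e by simp
  have "A *\<^sub>v (\<mu> + e) - \<mu> = c + A *\<^sub>v e"
    using A \<mu> e by (intro eq_vecI) (simp_all add: c_def scalar_prod_add_distrib[of _ n])
  then have "(let d = A *\<^sub>v (\<mu> + e) - \<mu> in d \<bullet> d) = c \<bullet> c + 2 * (c \<bullet> (A *\<^sub>v e)) + (A *\<^sub>v e) \<bullet> (A *\<^sub>v e)"
    using c Ae by (simp add: add_scalar_prod_distrib[of _ n] scalar_prod_add_distrib[of _ n]
        comm_scalar_prod[of "A *\<^sub>v e" n c])
  moreover have "c \<bullet> (A *\<^sub>v e) = (transpose_mat A *\<^sub>v c) \<bullet> e"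
    using transpose_vec_mult_scalar[OF A e c] by simp
  moreover have "(A *\<^sub>v e) \<bullet> (A *\<^sub>v e) = e \<bullet> ((transpose_mat A * A) *\<^sub>v e)"
    using transpose_vec_mult_scalar[OF A e Ae] A e
    by (simp add: comm_scalar_prod[of _ n e])
  ultimately show ?thesis by simp
qed

lemma integral_squared_error:
  fixes \<epsilon> :: "'a \<Rightarrow> real vec" and A :: "real mat"
  assumes "prob_space M"
    and dim: "\<forall>\<omega>\<in>space M. \<epsilon> \<omega> \<in> carrier_vec n"
    and int: "\<forall>i<n. integrable M (\<lambda>\<omega>. \<epsilon> \<omega> $ i)"
    and int2: "\<forall>i<n. \<forall>j<n. integrable M (\<lambda>\<omega>. \<epsilon> \<omega> $ i * \<epsilon> \<omega> $ j)"
    and mean: "\<forall>i<n. (\<integral>\<omega>. \<epsilon> \<omega> $ i \<partial>M) = 0"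
    and cov: "\<forall>i<n. \<forall>j<n. \<Omega> $$ (i, j) = (\<integral>\<omega>. \<epsilon> \<omega> $ i * \<epsilon> \<omega> $ j \<partial>M)"
    and \<Omega>: "\<Omega> \<in> carrier_mat n n" and A: "A \<in> carrier_mat n n" and \<mu>: "\<mu> \<in> carrier_vec n"
  shows "(\<integral>\<omega>. (let d = A *\<^sub>v (\<mu> + \<epsilon> \<omega>) - \<mu> in d \<bullet> d) \<partial>M)
       = (A *\<^sub>v \<mu> - \<mu>) \<bullet> (A *\<^sub>v \<mu> - \<mu>) + mtrace (transpose_mat A * A * \<Omega>)"
proof -
  interpret prob_space M by fact
  let ?c = "A *\<^sub>v \<mu> - \<mu>"
  have sum: "has_bochner_integral M
      (\<lambda>\<omega>. ?c \<bullet> ?c + 2 * ((transpose_mat A *\<^sub>v ?c) \<bullet> \<epsilon> \<omega>) + \<epsilon> \<omega> \<bullet> ((transpose_mat A * A) *\<^sub>v \<epsilon> \<omega>))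
      (?c \<bullet> ?c + 2 * 0 + mtrace (transpose_mat A * A * \<Omega>))"
    using has_bochner_integral_integrable[OF integrable_const[of "?c \<bullet> ?c"]] A \<Omega>
    by (intro has_bochner_integral_add has_bochner_integral_mult_right
        has_bochner_integral_centered_linear[OF dim int mean]
        has_bochner_integral_quadratic_form[OF dim int2 cov]) (auto simp: prob_space)
  have eq: "(let d = A *\<^sub>v (\<mu> + \<epsilon> \<omega>) - \<mu> in d \<bullet> d)
      = ?c \<bullet> ?c + 2 * ((transpose_mat A *\<^sub>v ?c) \<bullet> \<epsilon> \<omega>) + \<epsilon> \<omega> \<bullet> ((transpose_mat A * A) *\<^sub>v \<epsilon> \<omega>)"
    if "\<omega> \<in> space M" for \<omega>
    using squared_error_expand[OF A \<mu>] dim that by simp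
  have "has_bochner_integral M (\<lambda>\<omega>. (let d = A *\<^sub>v (\<mu> + \<epsilon> \<omega>) - \<mu> in d \<bullet> d))
      (?c \<bullet> ?c + mtrace (transpose_mat A * A * \<Omega>))"
    by (rule has_bochner_integral_cong[THEN iffD2, OF refl _ _ sum]) (simp_all add: eq)
  then show ?thesis by (rule has_bochner_integral_integral_eq)
qed

section \<open>The risk in tail-sum coordinates\<close>

lemma Pw_eq_mat_lincomb: "Pw X \<nu> M w = mat_lincomb (dim_row X) w (Pm X \<nu>) {1..M}"
  by (simp add: Pw_def mat_lincomb_def)

lemma projection_chain_lincomb_forms:
  fixes w :: "nat \<Rightarrow> real"
  assumes chain: "projection_chain n M P" and \<mu>: "\<mu> \<in> carrier_vec n" and \<Omega>: "\<Omega> \<in> carrier_mat n n"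
  defines "A \<equiv> mat_lincomb n w P {1..M}"
  shows "\<mu> \<bullet> ((transpose_mat A * A) *\<^sub>v \<mu>) + mtrace (transpose_mat A * A * \<Omega>)
      = (\<Sum>m=1..M. \<Sum>m'=1..M. w m * w m' * (\<mu> \<bullet> (P (min m m') *\<^sub>v \<mu>) + mtrace (P (min m m') * \<Omega>)))"
    "\<mu> \<bullet> (A *\<^sub>v \<mu>) = (\<Sum>m=1..M. w m * (\<mu> \<bullet> (P m *\<^sub>v \<mu>)))"
proof -
  have P: "P m \<in> carrier_mat n n" if "m \<le> M" for m
    using chain that by (simp add: projection_chain_def)
  have PM2: "\<forall>q\<in>{1..M} \<times> {1..M}. (\<lambda>(m, m'). P (min m m')) q \<in> carrier_mat n n" using P by auto
  show "\<mu> \<bullet> ((transpose_mat A * A) *\<^sub>v \<mu>) + mtrace (transpose_mat A * A * \<Omega>)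
      = (\<Sum>m=1..M. \<Sum>m'=1..M. w m * w m' * (\<mu> \<bullet> (P (min m m') *\<^sub>v \<mu>) + mtrace (P (min m m') * \<Omega>)))"
    using scalar_prod_mat_lincomb[OF PM2 \<mu> \<mu>] mtrace_mat_lincomb_mult[OF PM2 \<Omega>]
    unfolding A_def projection_chain_gram[OF chain]
    by (auto simp: sum.cartesian_product sum.distrib[symmetric] distrib_left intro!: sum.cong)
  show "\<mu> \<bullet> (A *\<^sub>v \<mu>) = (\<Sum>m=1..M. w m * (\<mu> \<bullet> (P m *\<^sub>v \<mu>)))"
    using P \<mu> unfolding A_def by (simp add: scalar_prod_mat_lincomb)
qed

lemma risk_eq_tail_loss:
  fixes Pr :: "'a measure" and \<epsilon> :: "'a \<Rightarrow> real vec"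
  assumes prob: "prob_space Pr"
    and eps_dim: "\<forall>\<omega>\<in>space Pr. \<epsilon> \<omega> \<in> carrier_vec n"
    and eps_int: "\<forall>i<n. integrable Pr (\<lambda>\<omega>. \<epsilon> \<omega> $ i)"
    and eps_int2: "\<forall>i<n. \<forall>j<n. integrable Pr (\<lambda>\<omega>. \<epsilon> \<omega> $ i * \<epsilon> \<omega> $ j)"
    and eps_mean: "\<forall>i<n. (\<integral>\<omega>. \<epsilon> \<omega> $ i \<partial>Pr) = 0"
    and Omega_dim: "\<Omega> \<in> carrier_mat n n"
    and Omega_cov: "\<forall>i<n. \<forall>j<n. \<Omega> $$ (i, j) = (\<integral>\<omega>. \<epsilon> \<omega> $ i * \<epsilon> \<omega> $ j \<partial>Pr)"
    and mu_dim: "\<mu> \<in> carrier_vec n"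
    and X_rows: "dim_row X = n" and chain: "projection_chain n M (Pm X \<nu>)"
  shows "risk Pr \<epsilon> X \<nu> M \<mu> w
       = tail_loss M (acoef X \<nu> \<mu>) (bcoef X \<nu> \<Omega>) w + \<mu> \<bullet> ((1\<^sub>m n - Pm X \<nu> M) *\<^sub>v \<mu>)"
proof -
  let ?P = "Pm X \<nu>"
  define A where "A = mat_lincomb n w ?P {1..M}"
  define s where "s m = \<mu> \<bullet> (?P m *\<^sub>v \<mu>)" for m
  define t where "t m = mtrace (?P m * \<Omega>)" for m
  have P: "?P m \<in> carrier_mat n n" if "m \<le> M" for m
    using chain that by (simp add: projection_chain_def)
  have A: "A \<in> carrier_mat n n" by (simp add: A_def)
  have s0: "s 0 = 0" and t0: "t 0 = 0"
    using chain mu_dim Omega_dim by (auto simp: projection_chain_def s_def t_def mtrace_def scalar_prod_def)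
  have a: "s j - s (j - 1) = acoef X \<nu> \<mu> j" if "j \<le> M" for j
    using P[of j] P[of "j - 1"] that mu_dim by (simp add: acoef_def s_def quadratic_form_minus)
  have b: "t j - t (j - 1) = bcoef X \<nu> \<Omega> j" if "j \<le> M" for j
    using P[of j] P[of "j - 1"] that Omega_dim by (simp add: bcoef_def t_def mtrace_minus_mult)
  have res: "\<mu> \<bullet> \<mu> - s M = \<mu> \<bullet> ((1\<^sub>m n - ?P M) *\<^sub>v \<mu>)"
    using P[of M] mu_dim by (simp add: s_def quadratic_form_minus[of _ n])
  have "risk Pr \<epsilon> X \<nu> M \<mu> w
      = (A *\<^sub>v \<mu> - \<mu>) \<bullet> (A *\<^sub>v \<mu> - \<mu>) + mtrace (transpose_mat A * A * \<Omega>)"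
    unfolding risk_def Pw_eq_mat_lincomb X_rows A_def[symmetric]
    by (rule integral_squared_error[OF prob eps_dim eps_int eps_int2 eps_mean Omega_cov Omega_dim A mu_dim])
  also have "\<dots> = (\<mu> \<bullet> ((transpose_mat A * A) *\<^sub>v \<mu>) + mtrace (transpose_mat A * A * \<Omega>))
      - 2 * (\<mu> \<bullet> (A *\<^sub>v \<mu>)) + \<mu> \<bullet> \<mu>"
    using residual_expand[OF A mu_dim] by simp
  also have "\<dots> = (\<Sum>m=1..M. \<Sum>m'=1..M. w m * w m' * (s (min m m') + t (min m m')))
      - 2 * (\<Sum>m=1..M. w m * s m) + \<mu> \<bullet> \<mu>"
    using projection_chain_lincomb_forms[OF chain mu_dim Omega_dim, of w]
    by (simp add: A_def s_def t_def)
  also have "\<dots> = (\<Sum>j=1..M. (s j - s (j - 1)) * (1 - tail_sum M w j)\<^sup>2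
        + (t j - t (j - 1)) * (tail_sum M w j)\<^sup>2) + (\<mu> \<bullet> \<mu> - s M)"
    using s0 t0 by (rule quadratic_risk_tail_sum_form)
  finally show ?thesis using a b res by (simp add: tail_loss_def)
qed

lemma acoef_nonneg_bcoef_pos:
  assumes chain: "projection_chain n M (Pm X \<nu>)"
    and strict: "\<forall>j\<in>{1..M}. Pm X \<nu> j \<noteq> Pm X \<nu> (j - 1)"
    and \<Omega>: "\<Omega> \<in> carrier_mat n n" "\<forall>v\<in>carrier_vec n. v \<noteq> 0\<^sub>v n \<longrightarrow> v \<bullet> (\<Omega> *\<^sub>v v) > 0"
    and \<mu>: "\<mu> \<in> carrier_vec n"
  shows "\<forall>j\<in>{1..M}. 0 \<le> acoef X \<nu> \<mu> j \<and> 0 < bcoef X \<nu> \<Omega> j"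
proof
  fix j assume "j \<in> {1..M}"
  then have j: "1 \<le> j" "j \<le> M" and ne: "Pm X \<nu> j \<noteq> Pm X \<nu> (j - 1)" using strict by auto
  show "0 \<le> acoef X \<nu> \<mu> j \<and> 0 < bcoef X \<nu> \<Omega> j"
    using projection_chain_increment_nonneg[OF chain j \<mu>]
      projection_chain_increment_trace_pos[OF chain j ne \<Omega>]
    by (simp add: acoef_def bcoef_def)
qed

lemma acoef_bcoef_first:
  assumes chain: "projection_chain n M (Pm X \<nu>)" and "1 \<le> M"
    and \<Omega>: "\<Omega> \<in> carrier_mat n n" and \<mu>: "\<mu> \<in> carrier_vec n"
  shows "acoef X \<nu> \<mu> 1 = \<mu> \<bullet> (Pm X \<nu> 1 *\<^sub>v \<mu>)" "bcoef X \<nu> \<Omega> 1 = mtrace (Pm X \<nu> 1 * \<Omega>)"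
proof -
  have P1: "Pm X \<nu> 1 \<in> carrier_mat n n" and P0: "Pm X \<nu> 0 = 0\<^sub>m n n"
    using assms by (auto simp: projection_chain_def)
  have "\<mu> \<bullet> (0\<^sub>m n n *\<^sub>v \<mu>) = 0" "mtrace (0\<^sub>m n n * \<Omega>) = 0"
    using \<Omega> \<mu> by (simp_all add: mtrace_def scalar_prod_def)
  then show "acoef X \<nu> \<mu> 1 = \<mu> \<bullet> (Pm X \<nu> 1 *\<^sub>v \<mu>)" "bcoef X \<nu> \<Omega> 1 = mtrace (Pm X \<nu> 1 * \<Omega>)"
    using quadratic_form_minus[OF P1 _ \<mu>] mtrace_minus_mult[OF P1 _ \<Omega>] P0
    by (simp_all add: acoef_def bcoef_def)
qed

theorem mainTheorem13:
  fixes Pr :: "'a measure" and \<epsilon> :: "'a \<Rightarrow> real vec"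
    and n p Mn :: nat and \<nu> :: "nat \<Rightarrow> nat"
    and X :: "real mat" and \<mu> :: "real vec" and \<Omega> :: "real mat"
  assumes prob: "prob_space Pr"
    and eps_dim: "\<forall>\<omega>\<in>space Pr. \<epsilon> \<omega> \<in> carrier_vec n"
    and eps_int: "\<forall>i<n. integrable Pr (\<lambda>\<omega>. \<epsilon> \<omega> $ i)"
    and eps_int2: "\<forall>i<n. \<forall>j<n. integrable Pr (\<lambda>\<omega>. \<epsilon> \<omega> $ i * \<epsilon> \<omega> $ j)"
    and eps_mean: "\<forall>i<n. (\<integral>\<omega>. \<epsilon> \<omega> $ i \<partial>Pr) = 0"
    and Omega_dim: "\<Omega> \<in> carrier_mat n n"
    and Omega_cov: "\<forall>i<n. \<forall>j<n. \<Omega> $$ (i,j) = (\<integral>\<omega>. \<epsilon> \<omega> $ i * \<epsilon> \<omega> $ j \<partial>Pr)"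
    and Omega_pd: "\<forall>v\<in>carrier_vec n. v \<noteq> 0\<^sub>v n \<longrightarrow> v \<bullet> (\<Omega> *\<^sub>v v) > 0"
    and mu_dim: "\<mu> \<in> carrier_vec n"
    and X_dim: "X \<in> carrier_mat n p"
    and Mn2: "Mn \<ge> 2"
    and nu0: "\<nu> 0 = 0"
    and nu_mono: "\<forall>m<Mn. \<nu> m < \<nu> (Suc m)"
    and nu_le: "\<nu> Mn \<le> p"
    and full_rank: "\<forall>m\<in>{1..Mn}. \<forall>v\<in>carrier_vec (\<nu> m).
                      Xsub X (\<nu> m) *\<^sub>v v = 0\<^sub>v n \<longrightarrow> v = 0\<^sub>v (\<nu> m)"
    and theta_mono: "\<forall>m\<in>{1..<Mn}.
        acoef X \<nu> \<mu> (Suc m) / (real n * bcoef X \<nu> \<Omega> (Suc m))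
          \<le> acoef X \<nu> \<mu> m / (real n * bcoef X \<nu> \<Omega> m)"
  shows
    "let a = acoef X \<nu> \<mu>; b = bcoef X \<nu> \<Omega>; R = risk Pr \<epsilon> X \<nu> Mn \<mu>;
         tr1 = mtrace (Pm X \<nu> 1 * \<Omega>);
         res = \<mu> \<bullet> ((1\<^sub>m n - Pm X \<nu> Mn) *\<^sub>v \<mu>);
         minW = tr1 + (\<Sum>m=2..Mn. a m * b m / (a m + b m)) + res;
         minQ = (\<Sum>m=1..Mn. a m * b m / (a m + b m)) + res;
         \<gamma> = (\<lambda>m. if m = 1 then 1 else a m / (a m + b m));
         wstar = (\<lambda>m. if m < Mn then \<gamma> m - \<gamma> (Suc m) else \<gamma> Mn)
     in wstar \<in> Wset Mn \<and> R wstar = minW \<and> (\<forall>w\<in>Wset Mn. minW \<le> R w)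
        \<and> (\<exists>w\<in>Qset Mn. R w = minQ) \<and> (\<forall>w\<in>Qset Mn. minQ \<le> R w)
        \<and> minW - minQ = tr1 ^ 2 / (\<mu> \<bullet> (Pm X \<nu> 1 *\<^sub>v \<mu>) + tr1)
        \<and> minW - minQ \<le> tr1"
proof -
  let ?P = "Pm X \<nu>" and ?a = "acoef X \<nu> \<mu>" and ?b = "bcoef X \<nu> \<Omega>"
  have X_rows: "dim_row X = n" using X_dim by simp
  have "\<forall>m\<in>{1..Mn}. full_column_rank (Xsub X (\<nu> m))"
    using full_rank X_rows by (simp add: full_column_rank_def)
  note chain = Pm_projection_chain[OF nu0 nu_mono this, unfolded X_rows]
  have ab: "\<forall>j\<in>{1..Mn}. 0 \<le> ?a j \<and> 0 < ?b j"
    by (rule acoef_nonneg_bcoef_pos[OF chain Omega_dim Omega_pd mu_dim])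
  have n_pos: "0 < n" using projection_chain_dim_pos[OF chain(1)] chain(2) Mn2 by force
  have mono: "\<forall>m\<in>{1..<Mn}. ?a (Suc m) / (?a (Suc m) + ?b (Suc m)) \<le> ?a m / (?a m + ?b m)"
  proof
    fix m assume "m \<in> {1..<Mn}"
    then show "?a (Suc m) / (?a (Suc m) + ?b (Suc m)) \<le> ?a m / (?a m + ?b m)"
      using ab theta_mono n_pos by (intro shrinkage_factor_mono[where c="real n"]) auto
  qed
  have risk: "risk Pr \<epsilon> X \<nu> Mn \<mu> w = tail_loss Mn ?a ?b w + \<mu> \<bullet> ((1\<^sub>m n - ?P Mn) *\<^sub>v \<mu>)" for w
    by (rule risk_eq_tail_loss[OF prob eps_dim eps_int eps_int2 eps_mean Omega_dim Omega_cov mu_dim X_rows chain(1)])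
  show ?thesis
    using tail_loss_minima[OF Mn2 ab mono risk] acoef_bcoef_first[OF chain(1) _ Omega_dim mu_dim] Mn2
    by (simp add: Let_def)
qed

end
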